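(* Let $G$ be a $4\times 4$ array with entries in $\{0,1,2,3\}$ in which each of the four values occurs exactly $4$ times, and in which every row and every column is a quad of values, i.e. is of type D (four different values), type H (two values, each occurring twice), or type S (one value occurring four times). If some column of $G$ is of type S, then every row of $G$ is of type D.
   Context: This describes the values of a single attribute in a semimagic quad square built from the 16 cards of the EvenQuads-16 deck (the 16 cards sharing one fixed value of a third attribute), where each value of the attribute appears exactly four times. *)

theory Defs
  imports Main "HOL-Library.Multiset"
begin

definition row :: "(nat \<Rightarrow> nat \<Rightarrow> nat) \<Rightarrow> nat \<Rightarrow> nat list" where
  "row G i = [G i 0, G i 1, G i 2, G i 3]"

definition col :: "(nat \<Rightarrow> nat \<Rightarrow> nat) \<Rightarrow> nat \<Rightarrow> nat list" where
  "col G j = [G 0 j, G 1 j, G 2 j, G 3 j]"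

definition typeD :: "nat list \<Rightarrow> bool" where
  "typeD xs \<longleftrightarrow> length xs = 4 \<and> distinct xs"

definition typeH :: "nat list \<Rightarrow> bool" where
  "typeH xs \<longleftrightarrow> (\<exists>a b. a \<noteq> b \<and> mset xs = {#a, a, b, b#})"

definition typeS :: "nat list \<Rightarrow> bool" where
  "typeS xs \<longleftrightarrow> (\<exists>a. xs = replicate 4 a)"

definition is_quad :: "nat list \<Rightarrow> bool" where
  "is_quad xs \<longleftrightarrow> typeD xs \<or> typeH xs \<or> typeS xs"

end

theory Submission
  imports Defs
begin

text \<open>A column of type S uses all four copies of its value a, so a occurs in no other
  column and hence exactly once in every row. A quad containing some value exactly once
  is neither of type H (counts 0 or 2) nor of type S (counts 0 or 4), so it is of type D.\<close>

lemma typeH_count_ne_1: "typeH xs \<Longrightarrow> count (mset xs) a \<noteq> 1"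
  unfolding typeH_def by (auto split: if_splits)

lemma typeS_count_ne_1: "typeS xs \<Longrightarrow> count (mset xs) a \<noteq> 1"
  unfolding typeS_def by (auto simp: count_replicate_mset split: if_splits)

lemma is_quad_count_1_imp_typeD:
  assumes "is_quad xs" and "count (mset xs) a = 1"
  shows "typeD xs"
  using assms typeH_count_ne_1 typeS_count_ne_1 unfolding is_quad_def by blast

lemma less_4_cases:
  fixes n :: nat
  assumes "n < 4"
  obtains "n = 0" | "n = 1" | "n = 2" | "n = 3"
  using assms by fastforce

lemma col_replicate_nth:
  assumes "col G j = replicate 4 a" and "r < 4"
  shows "G r j = a"
  using assms(2) by (cases rule: less_4_cases) (use assms(1) in \<open>auto simp: col_def numeral_eq_Suc\<close>)

lemma count_row_eq_1:
  assumes "j < 4" and "G i j = a" and "\<And>k. k < 4 \<Longrightarrow> G i k = a \<Longrightarrow> k = j"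
  shows "count (mset (row G i)) a = 1"
  using assms(1) by (cases rule: less_4_cases) (use assms(2) assms(3)[of 0] assms(3)[of 1]
      assms(3)[of 2] assms(3)[of 3] in \<open>auto simp: row_def\<close>)

lemma constant_column_takes_all_cells:
  fixes G :: "nat \<Rightarrow> nat \<Rightarrow> nat"
  assumes "j < 4" and column: "\<And>r. r < 4 \<Longrightarrow> G r j = a"
    and card: "card {(i, k). i < 4 \<and> k < 4 \<and> G i k = a} = 4"
    and "i < 4" "k < 4" "G i k = a"
  shows "k = j"
proof -
  define cells where "cells = {(i, k). i < 4 \<and> k < 4 \<and> G i k = a}"
  define column_cells where "column_cells = (\<lambda>r. (r, j)) ` {..<4::nat}"
  have "finite cells"
    unfolding cells_def by (rule finite_subset[of _ "{..<4} \<times> {..<4}"]) auto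
  moreover have "column_cells \<subseteq> cells"
    unfolding column_cells_def cells_def using column \<open>j < 4\<close> by auto
  moreover have "card column_cells = card cells"
    using card unfolding column_cells_def cells_def by (simp add: card_image inj_on_def)
  ultimately have "column_cells = cells" by (rule card_subset_eq)
  moreover have "(i, k) \<in> cells" using assms(4-6) unfolding cells_def by simp
  ultimately show "k = j" unfolding column_cells_def by auto
qed

theorem mainTheorem2:
  fixes G :: "nat \<Rightarrow> nat \<Rightarrow> nat"
  assumes vals: "\<And>i j. i < 4 \<Longrightarrow> j < 4 \<Longrightarrow> G i j \<in> {0, 1, 2, 3}"
    and counts: "\<And>v. v \<in> {0, 1, 2, 3} \<Longrightarrow>
                   card {(i, j). i < 4 \<and> j < 4 \<and> G i j = v} = 4"
    and rows: "\<And>i. i < 4 \<Longrightarrow> is_quad (row G i)"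
    and cols: "\<And>j. j < 4 \<Longrightarrow> is_quad (col G j)"
    and scol: "\<exists>j < 4. typeS (col G j)"
  shows "\<forall>i < 4. typeD (row G i)"
proof (intro allI impI)
  fix i :: nat assume "i < 4"
  obtain j a where "j < 4" and "col G j = replicate 4 a"
    using scol unfolding typeS_def by blast
  then have column: "\<And>r. r < 4 \<Longrightarrow> G r j = a" by (simp add: col_replicate_nth)
  have "a \<in> {0, 1, 2, 3}" using vals[of 0 j] column[of 0] \<open>j < 4\<close> by simp
  then have "\<And>k. k < 4 \<Longrightarrow> G i k = a \<Longrightarrow> k = j"
    using constant_column_takes_all_cells[OF \<open>j < 4\<close> column counts] \<open>i < 4\<close> by blast
  then have "count (mset (row G i)) a = 1"
    using count_row_eq_1 \<open>j < 4\<close> column \<open>i < 4\<close> by blast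
  then show "typeD (row G i)" using is_quad_count_1_imp_typeD rows \<open>i < 4\<close> by blast
qed

end
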